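(* Suppose Assumption A and Assumption B (defined in the context) hold for the dynamic accuracy DFO algorithm described in the context, with criticality parameter $\epsilon>0$. Let $k_\epsilon$ be such that $\|\nabla f(\theta^k)\|\ge\epsilon$ for all $k=0,\ldots,k_\epsilon$ and $k_\epsilon+1$ is the first index $k$ with $\|\nabla f(\theta^k)\|<\epsilon$. Let $\mathcal{S}_\epsilon$ be the set of iterations $k\in\{0,\ldots,k_\epsilon\}$ which are successful, i.e. $\tilde\rho^k\ge\eta_2$, or $\tilde\rho^k\ge\eta_1$ and $m^k$ is fully linear in $B(\theta^k,\Delta^k)$. Then $$|\mathcal{S}_\epsilon|\le\frac{2(\kappa_{\rm eg}+1)f(\theta^0)}{(\eta_1-2\eta_1')\epsilon\Delta_{\min}}.$$
   Context: Setting. Let $n,d\ge 1$ and $r=(r_1,\ldots,r_n):\mathbb{R}^d\to\mathbb{R}^n$, with objective $f(\theta)=\frac1n\|r(\theta)\|^2=\frac1n\sum_{i=1}^n r_i(\theta)^2$ (Euclidean norm). In the application, $r_i(\theta)=\|\hat x_i(\theta)-x_i\|$ where $\hat x_i(\theta)$ is the minimizer of a lower-level problem that can only be computed approximately. The algorithm never sees $r$ exactly: for any $\theta$ it can compute an approximation $\tilde r(\theta)$ (in the application $\tilde r_i(\theta)=\|\tilde x_i(\theta)-x_i\|$ with $\tilde x_i(\theta)$ an approximate minimizer whose error can be made as small as desired), and sets $\tilde f(\theta)=\frac1n\|\tilde r(\theta)\|^2$. We say $\tilde f(\theta)$ is evaluated with accuracy $\delta$ if $|\tilde f(\theta)-f(\theta)|\le\delta$.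 Models. At iteration $k$ the algorithm holds an iterate $\theta^k$, a radius $\Delta^k>0$, and interpolation points $z^0=\theta^k,z^1,\ldots,z^d\in\mathbb{R}^d$ with $z^1-\theta^k,\ldots,z^d-\theta^k$ linearly independent; $J^k\in\mathbb{R}^{n\times d}$ is the unique matrix with $\tilde r(\theta^k)+J^k(z^t-\theta^k)=\tilde r(z^t)$ for $t=1,\ldots,d$. Set $M^k(s)=\tilde r(\theta^k)+J^k s$ and $m^k(s)=\frac1n\|M^k(s)\|^2=\tilde f(\theta^k)+(g^k)^Ts+\frac12 s^TH^ks$ with $g^k=\frac2n (J^k)^T\tilde r(\theta^k)$, $H^k=\frac2n(J^k)^TJ^k$. Fixed constants $\kappa_{\rm ef},\kappa_{\rm eg}>0$ (independent of $k,\theta^k,\Delta^k$) are given, and $m^k$ is called fully linear in $B(\theta^k,\Delta^k)$ if $|f(\theta^k+s)-m^k(s)|\le\kappa_{\rm ef}(\Delta^k)^2$ and $\|\nabla f(\theta^k+s)-\nabla m^k(s)\|\le\kappa_{\rm eg}\Delta^k$ for all $\|s\|\le\Delta^k$. The algorithm has a procedure which, by replacing interpolation points, makes the model fully linear in a given ball. Algorithm. Parameters: $\Delta_{\max}>0$, $0<\gamma_{\rm dec}<1<\gamma_{\rm inc}$, $0<\eta_1\le\eta_2<1$, $0<\eta_1'<\min(\eta_1,1-\eta_2)/2$, $\epsilon>0$; inputs $\theta^0\in\mathbb{R}^d$, $0<\Delta^0\le\Delta_{\max}$. Build an initial model $m^0$ from an arbitrary interpolation set. For $k=0,1,2,\ldots$: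 (1) [accuracy phase] repeat: (a) except on the first pass, re-evaluate $\tilde f(\theta^k)$ with accuracy $\delta^k\le\eta_1'[m^k(0)-m^k(s^k)]$ using the $s^k$ from the previous pass; (b) [criticality phase] if $\|g^k\|\le\epsilon$, replace $\Delta^k$ by $\gamma_{\rm dec}^i\Delta^k$ for $i=0,1,2,\ldots$ (making the model fully linear in the current ball) until $m^k$ is fully linear in $B(\theta^k,\Delta^k)$ and $\Delta^k\le\|g^k\|$; (c) compute $s^k$ with $\|s^k\|\le\Delta^k$ approximately minimizing $m^k$ over that ball; until $\tilde f(\theta^k)$ has been evaluated with accuracy $\delta^k\le\eta_1'[m^k(0)-m^k(s^k)]$. (2) Evaluate $\tilde f(\theta^k+s^k)$ with accuracy $\delta^k_+\le\eta_1'[m^k(0)-m^k(s^k)]$ and set $\tilde\rho^k=\frac{\tilde f(\theta^k)-\tilde f(\theta^k+s^k)}{m^k(0)-m^k(s^k)}$. (3) Set $\theta^{k+1}=\theta^k+s^k$ if $\tilde\rho^k\ge\eta_2$, or if $\tilde\rho^k\ge\eta_1$ and $m^k$ is fully linear in $B(\theta^k,\Delta^k)$; otherwise $\theta^{k+1}=\theta^k$. Set $\Delta^{k+1}=\min(\gamma_{\rm inc}\Delta^k,\Delta_{\max})$ if $\tilde\rho^k\ge\eta_2$; $\Delta^{k+1}=\Delta^k$ if $\tilde\rho^k<\eta_2$ and $m^k$ is not fully linear in $B(\theta^k,\Delta^k)$; $\Delta^{k+1}=\gamma_{\rm dec}\Delta^k$ otherwise. (4) If $\theta^{k+1}=\theta^k+s^k$,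 form $m^{k+1}$ by adding $\theta^{k+1}$ to the interpolation set (removing an existing point); otherwise set $m^{k+1}=m^k$ if $m^k$ is fully linear in $B(\theta^k,\Delta^k)$, else form $m^{k+1}$ by making $m^k$ fully linear in $B(\theta^{k+1},\Delta^{k+1})$. Assumption A: the set $\mathcal{B}=\{z: \|z-\theta\|\le\Delta_{\max}\text{ for some }\theta\text{ with }f(\theta)\le f(\theta^0)\}$ is bounded, and $r$ is continuously differentiable on $\mathcal{B}$ with $\partial r$ Lipschitz continuous with constant $L_J$ on $\mathcal{B}$. Assumption B: for all $k$, $m^k(0)-m^k(s^k)\ge\frac12\|g^k\|\min\left(\Delta^k,\frac{\|g^k\|}{\|H^k\|+1}\right)$, and there is $\kappa_H\ge1$ with $\|H^k\|+1\le\kappa_H$ for all $k$. Constants: $c_0:=\min\left(\frac{1-\eta_2-2\eta_1'}{4\kappa_{\rm ef}},\frac{1}{\kappa_H}\right)$ and $\Delta_{\min}:=\gamma_{\rm dec}\min\left(\Delta^0,\frac{c_0\epsilon}{\kappa_{\rm eg}+1},\frac{\gamma_{\rm dec}\epsilon}{\kappa_{\rm eg}+1}\right)$. *)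

theory Defs
  imports "HOL-Analysis.Analysis"
begin

definition fobj :: "(real^'d \<Rightarrow> real^'n) \<Rightarrow> real^'d \<Rightarrow> real" where
  "fobj r \<theta> = (1 / real CARD('n)) * (norm (r \<theta>))\<^sup>2"

definition grad :: "(real^'d \<Rightarrow> real) \<Rightarrow> real^'d \<Rightarrow> real^'d" where
  "grad f x = (THE D. GDERIV f x :> D)"

text \<open>Model m(s) = (1/n) norm (r0 + J s)^2 built from residual value r0 = tilde r(theta^k) and J = J^k.\<close>
definition mval :: "real^'n \<Rightarrow> real^'d^'n \<Rightarrow> real^'d \<Rightarrow> real" where
  "mval r0 J s = (1 / real CARD('n)) * (norm (r0 + J *v s))\<^sup>2"

definition mgrad :: "real^'n \<Rightarrow> real^'d^'n \<Rightarrow> real^'d \<Rightarrow> real^'d" where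
  "mgrad r0 J s = (2 / real CARD('n)) *\<^sub>R (transpose J *v (r0 + J *v s))"

definition mg :: "real^'n \<Rightarrow> real^'d^'n \<Rightarrow> real^'d" where
  "mg r0 J = (2 / real CARD('n)) *\<^sub>R (transpose J *v r0)"

definition mH :: "real^'d^'n \<Rightarrow> real^'d^'d" where
  "mH J = (2 / real CARD('n)) *\<^sub>R (transpose J ** J)"

definition opnorm :: "real^'a^'b \<Rightarrow> real" where
  "opnorm A = onorm (\<lambda>v. A *v v)"

definition fully_linear ::
  "(real^'d \<Rightarrow> real^'n) \<Rightarrow> real \<Rightarrow> real \<Rightarrow> real^'n \<Rightarrow> real^'d^'n \<Rightarrow> real^'d \<Rightarrow> real \<Rightarrow> bool" where
  "fully_linear r kef keg r0 J \<theta> \<Delta> \<longleftrightarrow>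
     (\<forall>s. norm s \<le> \<Delta> \<longrightarrow>
        \<bar>fobj r (\<theta> + s) - mval r0 J s\<bar> \<le> kef * \<Delta>\<^sup>2 \<and>
        norm (grad (fobj r) (\<theta> + s) - mgrad r0 J s) \<le> keg * \<Delta>)"

definition c0_const :: "real \<Rightarrow> real \<Rightarrow> real \<Rightarrow> real \<Rightarrow> real" where
  "c0_const \<eta>2 \<eta>1' kef kH = min ((1 - \<eta>2 - 2 * \<eta>1') / (4 * kef)) (1 / kH)"

definition Delta_min ::
  "real \<Rightarrow> real \<Rightarrow> real \<Rightarrow> real \<Rightarrow> real \<Rightarrow> real \<Rightarrow> real \<Rightarrow> real \<Rightarrow> real" where
  "Delta_min \<gamma>dec \<Delta>0 \<eta>2 \<eta>1' kef keg kH \<epsilon> =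
     \<gamma>dec * min \<Delta>0 (min (c0_const \<eta>2 \<eta>1' kef kH * \<epsilon> / (keg + 1)) (\<gamma>dec * \<epsilon> / (keg + 1)))"

definition assumption_A :: "(real^'d \<Rightarrow> real^'n) \<Rightarrow> real^'d \<Rightarrow> real \<Rightarrow> bool" where
  "assumption_A r \<theta>0 \<Delta>max \<longleftrightarrow>
     (let B = {z. \<exists>\<theta>. fobj r \<theta> \<le> fobj r \<theta>0 \<and> norm (z - \<theta>) \<le> \<Delta>max} in
      bounded B \<and>
      (\<exists>Jr :: real^'d \<Rightarrow> real^'d^'n. \<exists>LJ.
          (\<forall>z\<in>B. (r has_derivative (\<lambda>h. Jr z *v h)) (at z)) \<and>
          continuous_on B Jr \<and>
          (\<forall>x\<in>B. \<forall>y\<in>B. opnorm (Jr x - Jr y) \<le> LJ * norm (x - y))))"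

end

theory Submission
  imports Defs
begin

text \<open>Before the true gradient drops below \<open>\<epsilon>\<close>, the model gradient satisfies
  \<open>\<parallel>g\<^sup>k\<parallel> \<ge> \<epsilon>/(\<kappa>\<^sub>e\<^sub>g+1)\<close> and the radius stays above \<open>\<Delta>\<^sub>m\<^sub>i\<^sub>n\<close>. Indeed, the criticality phase
  shrinks only radii at which a fully linear model has a gradient smaller than the radius, which
  forces the radius to be at least \<open>\<epsilon>/(\<kappa>\<^sub>e\<^sub>g+1)\<close>; and a fully linear model on a ball of radius
  at most \<open>c\<^sub>0 \<parallel>g\<^sup>k\<parallel>\<close> always yields a very successful step, so the update of step 3 shrinks the
  radius only when it exceeds \<open>c\<^sub>0 \<epsilon>/(\<kappa>\<^sub>e\<^sub>g+1)\<close>. By the Cauchy decrease condition every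
  successful iteration therefore predicts a decrease of at least \<open>\<epsilon> \<Delta>\<^sub>m\<^sub>i\<^sub>n/(2(\<kappa>\<^sub>e\<^sub>g+1))\<close>,
  of which the inexact evaluations lose at most the fraction \<open>2\<eta>\<^sub>1'\<close>. Since \<open>f \<ge> 0\<close> never
  increases along the iterates, the total decrease is at most \<open>f(\<theta>\<^sup>0)\<close>.\<close>

lemma norm_grad_le_of_fully_linear:
  assumes "fully_linear r kef keg r0 J \<theta> \<Delta>" "0 \<le> \<Delta>" "0 \<le> keg"
    and "\<Delta> \<le> t" "norm (mg r0 J) \<le> t"
  shows "norm (grad (fobj r) \<theta>) \<le> (keg + 1) * t"
proof -
  have "mgrad r0 J 0 = mg r0 J"
    by (simp add: mgrad_def mg_def)
  then have "norm (grad (fobj r) \<theta> - mg r0 J) \<le> keg * \<Delta>"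
    using assms(1,2) unfolding fully_linear_def by (metis add_0_right norm_zero)
  then have "norm (grad (fobj r) \<theta>) \<le> t + keg * t"
    using norm_triangle_sub[of "grad (fobj r) \<theta>" "mg r0 J"] mult_left_mono[OF assms(4,3)] assms(5)
    by linarith
  then show ?thesis
    by (simp add: algebra_simps)
qed

lemma card_mult_le_of_telescoping:
  fixes F :: "nat \<Rightarrow> 'a::linordered_idom"
  assumes "S \<subseteq> {..K}" "\<And>k. k \<le> K \<Longrightarrow> F (Suc k) \<le> F k"
    and "\<And>k. k \<in> S \<Longrightarrow> c \<le> F k - F (Suc k)" "0 \<le> F (Suc K)"
  shows "of_nat (card S) * c \<le> F 0"
proof -
  have "of_nat (card S) * c = (\<Sum>k\<in>S. c)"
    by simp
  also have "\<dots> \<le> (\<Sum>k\<in>S. F k - F (Suc k))"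
    using assms(3) by (rule sum_mono)
  also have "\<dots> \<le> (\<Sum>k\<le>K. F k - F (Suc k))"
    using assms(1,2) by (intro sum_mono2) auto
  also have "\<dots> = F 0 - F (Suc K)"
    by (rule sum_telescope)
  finally show ?thesis
    using assms(4) by simp
qed

locale dfo_run =
  fixes r :: "real^'d \<Rightarrow> real^'n"
    and \<Delta>0 \<Delta>max \<gamma>dec \<gamma>inc \<eta>1 \<eta>2 \<eta>1' \<epsilon> kef keg kH :: real
    and \<theta> :: "nat \<Rightarrow> real^'d"
    and \<Delta>init \<Delta> :: "nat \<Rightarrow> real"
    and icrit :: "nat \<Rightarrow> nat"
    and rt :: "nat \<Rightarrow> real^'n"
    and J :: "nat \<Rightarrow> real^'d^'n"
    and s :: "nat \<Rightarrow> real^'d"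
    and rp :: "nat \<Rightarrow> real^'n"
    and \<rho> :: "nat \<Rightarrow> real"
  assumes params: "0 < \<gamma>dec" "\<gamma>dec < 1" "1 \<le> \<gamma>inc" "0 < \<eta>1" "\<eta>1 \<le> \<eta>2" "\<eta>2 < 1"
      "0 < \<eta>1'" "2 * \<eta>1' < \<eta>1" "2 * \<eta>1' < 1 - \<eta>2"
      "0 < \<epsilon>" "0 < kef" "0 \<le> keg" "1 \<le> kH" "0 < \<Delta>0" "\<Delta>0 \<le> \<Delta>max"
    and init_radius: "\<Delta>init 0 = \<Delta>0"
    and criticality_shrink: "\<And>k. \<Delta> k = \<gamma>dec ^ icrit k * \<Delta>init k"
    and criticality_fail: "\<And>k j. j < icrit k \<Longrightarrow>
        \<exists>r0 J'. fully_linear r kef keg r0 J' (\<theta> k) (\<gamma>dec ^ j * \<Delta>init k)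
               \<and> norm (mg r0 J') < \<gamma>dec ^ j * \<Delta>init k"
    and criticality_post: "\<And>k. norm (mg (rt k) (J k)) \<le> \<epsilon> \<Longrightarrow>
        fully_linear r kef keg (rt k) (J k) (\<theta> k) (\<Delta> k) \<and> \<Delta> k \<le> norm (mg (rt k) (J k))"
    and step_bound: "\<And>k. norm (s k) \<le> \<Delta> k"
    and accuracy: "\<And>k. \<bar>mval (rt k) (J k) 0 - fobj r (\<theta> k)\<bar>
                 \<le> \<eta>1' * (mval (rt k) (J k) 0 - mval (rt k) (J k) (s k))"
    and trial_accuracy: "\<And>k. \<bar>(1 / real CARD('n)) * (norm (rp k))\<^sup>2 - fobj r (\<theta> k + s k)\<bar>
                 \<le> \<eta>1' * (mval (rt k) (J k) 0 - mval (rt k) (J k) (s k))"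
    and rho_def: "\<And>k. \<rho> k = (mval (rt k) (J k) 0 - (1 / real CARD('n)) * (norm (rp k))\<^sup>2)
                          / (mval (rt k) (J k) 0 - mval (rt k) (J k) (s k))"
    and cauchy_decrease: "\<And>k. mval (rt k) (J k) 0 - mval (rt k) (J k) (s k)
        \<ge> 1/2 * norm (mg (rt k) (J k))
             * min (\<Delta> k) (norm (mg (rt k) (J k)) / (opnorm (mH (J k)) + 1))"
    and hessian_bound: "\<And>k. opnorm (mH (J k)) + 1 \<le> kH"
    and iterate_update: "\<And>k. \<theta> (Suc k) =
        (if \<rho> k \<ge> \<eta>2 \<or> (\<rho> k \<ge> \<eta>1 \<and> fully_linear r kef keg (rt k) (J k) (\<theta> k) (\<Delta> k))
         then \<theta> k + s k else \<theta> k)"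
    and radius_update: "\<And>k. \<Delta>init (Suc k) =
        (if \<rho> k \<ge> \<eta>2 then min (\<gamma>inc * \<Delta> k) \<Delta>max
         else if \<not> fully_linear r kef keg (rt k) (J k) (\<theta> k) (\<Delta> k) then \<Delta> k
         else \<gamma>dec * \<Delta> k)"
begin

definition pred_decrease :: "nat \<Rightarrow> real" where
  "pred_decrease k = mval (rt k) (J k) 0 - mval (rt k) (J k) (s k)"

definition successful :: "nat \<Rightarrow> bool" where
  "successful k \<longleftrightarrow>
     \<rho> k \<ge> \<eta>2 \<or> (\<rho> k \<ge> \<eta>1 \<and> fully_linear r kef keg (rt k) (J k) (\<theta> k) (\<Delta> k))"

abbreviation norm_g :: "nat \<Rightarrow> real" where
  "norm_g k \<equiv> norm (mg (rt k) (J k))"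

abbreviation c0 :: real where
  "c0 \<equiv> c0_const \<eta>2 \<eta>1' kef kH"

abbreviation \<Delta>min :: real where
  "\<Delta>min \<equiv> Delta_min \<gamma>dec \<Delta>0 \<eta>2 \<eta>1' kef keg kH \<epsilon>"

lemma Delta_init_pos: "0 < \<Delta>init k"
proof (induction k)
  case 0
  show ?case
    using init_radius params by simp
next
  case (Suc k)
  then have "0 < \<Delta> k"
    using criticality_shrink[of k] params by simp
  then show ?case
    using radius_update[of k] params by auto
qed

lemma Delta_pos: "0 < \<Delta> k"
  using Delta_init_pos[of k] criticality_shrink[of k] params by simp

lemma pred_decrease_nonneg: "0 \<le> pred_decrease k"
proof -
  have "0 \<le> \<eta>1' * pred_decrease k"
    using accuracy[of k] unfolding pred_decrease_def by (meson abs_ge_zero order_trans)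
  then show ?thesis
    using params by (simp add: zero_le_mult_iff)
qed

lemma norm_g_lower_bound:
  assumes "\<epsilon> \<le> norm (grad (fobj r) (\<theta> k))"
  shows "\<epsilon> / (keg + 1) \<le> norm_g k"
proof (cases "norm_g k \<le> \<epsilon>")
  case True
  then have "\<epsilon> \<le> (keg + 1) * norm_g k"
    using criticality_post[of k] norm_grad_le_of_fully_linear[of r kef keg] assms Delta_pos[of k] params
    by (meson less_imp_le order_trans order_refl)
  then show ?thesis
    using params by (simp add: field_simps)
next
  case False
  have "\<epsilon> / (keg + 1) \<le> \<epsilon>"
    using params by (simp add: field_simps)
  with False show ?thesis
    by simp
qed

lemma Delta_ge_after_criticality:
  assumes "\<epsilon> \<le> norm (grad (fobj r) (\<theta> k))"
  shows "min (\<Delta>init k) (\<gamma>dec * \<epsilon> / (keg + 1)) \<le> \<Delta> k"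
proof (cases "icrit k")
  case 0
  then show ?thesis
    using criticality_shrink[of k] by simp
next
  case (Suc j)
  define t where "t = \<gamma>dec ^ j * \<Delta>init k"
  obtain r0 J' where "fully_linear r kef keg r0 J' (\<theta> k) t" "norm (mg r0 J') < t"
    using criticality_fail[of j k] Suc unfolding t_def by auto
  moreover have "0 \<le> t"
    using Delta_init_pos[of k] params unfolding t_def by simp
  ultimately have "\<epsilon> \<le> (keg + 1) * t"
    using norm_grad_le_of_fully_linear[of r kef keg r0 J' "\<theta> k" t t] assms params by simp
  then have "\<epsilon> / (keg + 1) \<le> t"
    using params by (simp add: pos_divide_le_eq mult.commute)
  then have "\<gamma>dec * (\<epsilon> / (keg + 1)) \<le> \<gamma>dec * t"
    using params by (intro mult_left_mono) auto
  also have "\<dots> = \<Delta> k"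
    using criticality_shrink[of k] Suc unfolding t_def by simp
  finally show ?thesis
    by simp
qed

lemma c0_pos: "0 < c0"
  using params by (simp add: c0_const_def)

lemma kef_mult_c0_le: "kef * c0 \<le> (1 - \<eta>2 - 2 * \<eta>1') / 4"
proof -
  have "c0 \<le> (1 - \<eta>2 - 2 * \<eta>1') / (4 * kef)"
    by (simp add: c0_const_def)
  then show ?thesis
    using params by (simp add: field_simps)
qed

lemma c0_mult_le_Cauchy_radius:
  assumes "0 \<le> x"
  shows "c0 * x \<le> x / (opnorm (mH (J k)) + 1)"
proof -
  have "0 \<le> opnorm (mH (J k))"
    unfolding opnorm_def by (intro onorm_pos_le matrix_vector_mul_bounded_linear)
  then have "x / kH \<le> x / (opnorm (mH (J k)) + 1)"
    using hessian_bound[of k] assms by (simp add: frac_le)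
  moreover have "c0 * x \<le> x / kH"
    using assms params mult_right_mono[of c0 "1 / kH" x] by (simp add: c0_const_def)
  ultimately show ?thesis
    by linarith
qed

lemma pred_decrease_ge:
  assumes "0 \<le> t" "t \<le> \<Delta> k" "t \<le> c0 * norm_g k"
  shows "norm_g k * t / 2 \<le> pred_decrease k"
proof -
  have "t \<le> min (\<Delta> k) (norm_g k / (opnorm (mH (J k)) + 1))"
    using assms order_trans[OF assms(3) c0_mult_le_Cauchy_radius[of "norm_g k" k]] by simp
  then have "norm_g k * t / 2 \<le> 1/2 * norm_g k * min (\<Delta> k) (norm_g k / (opnorm (mH (J k)) + 1))"
    by (simp add: mult_left_mono)
  then show ?thesis
    using cauchy_decrease[of k] unfolding pred_decrease_def by linarith
qed

text \<open>Here the choice of \<open>c\<^sub>0\<close> enters: on such a ball the model error \<open>\<kappa>\<^sub>e\<^sub>f \<Delta>\<^sup>2\<close> and the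
  evaluation error together stay below \<open>(1-\<eta>\<^sub>2)/2\<close> times the predicted decrease.\<close>

lemma very_successful_if_small_radius:
  assumes "fully_linear r kef keg (rt k) (J k) (\<theta> k) (\<Delta> k)" "\<Delta> k \<le> c0 * norm_g k"
  shows "\<eta>2 \<le> \<rho> k"
proof -
  let ?D = "pred_decrease k"
  let ?m0 = "mval (rt k) (J k) 0" and ?ms = "mval (rt k) (J k) (s k)"
  let ?fp = "(1 / real CARD('n)) * (norm (rp k))\<^sup>2" and ?fs = "fobj r (\<theta> k + s k)"
  have decrease: "norm_g k * \<Delta> k / 2 \<le> ?D"
    using pred_decrease_ge[of "\<Delta> k" k] Delta_pos[of k] assms(2) by simp
  have "0 < c0 * norm_g k"
    using Delta_pos[of k] assms(2) by linarith
  then have "0 < norm_g k"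
    using c0_pos zero_less_mult_pos by blast
  then have "0 < norm_g k * \<Delta> k / 2"
    using Delta_pos[of k] by simp
  then have "0 < ?D"
    using decrease by linarith
  have "kef * (\<Delta> k)\<^sup>2 \<le> kef * (\<Delta> k * (c0 * norm_g k))"
    using assms(2) Delta_pos[of k] params by (simp add: power2_eq_square)
  also have "\<dots> = (kef * c0) * (norm_g k * \<Delta> k)"
    by (simp add: algebra_simps)
  also have "\<dots> \<le> (1 - \<eta>2 - 2 * \<eta>1') / 4 * (norm_g k * \<Delta> k)"
    using kef_mult_c0_le \<open>0 < norm_g k\<close> Delta_pos[of k] by (simp add: mult_right_mono)
  also have "\<dots> \<le> (1 - \<eta>2 - 2 * \<eta>1') / 2 * ?D"
    using mult_left_mono[OF decrease, of "(1 - \<eta>2 - 2 * \<eta>1') / 2"] params by simp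
  finally have "kef * (\<Delta> k)\<^sup>2 \<le> ?D / 2 - \<eta>2 * ?D / 2 - \<eta>1' * ?D"
    by (simp add: algebra_simps)
  then have "?fs - ?ms \<le> ?D / 2 - \<eta>2 * ?D / 2 - \<eta>1' * ?D"
    using assms(1) step_bound[of k] unfolding fully_linear_def by (meson abs_le_D1 order_trans)
  moreover have "?fp - ?fs \<le> \<eta>1' * ?D"
    using trial_accuracy[of k] unfolding pred_decrease_def by (rule abs_le_D1)
  moreover have "\<eta>2 * ?D \<le> ?D"
    using params \<open>0 < ?D\<close> by simp
  moreover have "?D = ?m0 - ?ms"
    by (simp add: pred_decrease_def)
  ultimately have "\<eta>2 * ?D \<le> ?m0 - ?fp"
    by linarith
  then show ?thesis
    using rho_def[of k] \<open>0 < ?D\<close> by (simp add: pred_decrease_def pos_le_divide_eq)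
qed

lemma Delta_min_bounds:
  "0 < \<Delta>min" "\<Delta>min \<le> \<Delta>0" "\<Delta>min \<le> \<gamma>dec * (c0 * \<epsilon> / (keg + 1))"
  "\<Delta>min \<le> c0 * \<epsilon> / (keg + 1)" "\<Delta>min \<le> \<gamma>dec * \<epsilon> / (keg + 1)"
proof -
  define m where "m = min \<Delta>0 (min (c0 * \<epsilon> / (keg + 1)) (\<gamma>dec * \<epsilon> / (keg + 1)))"
  have \<Delta>min_eq: "\<Delta>min = \<gamma>dec * m"
    by (simp add: Delta_min_def m_def)
  have "0 < m"
    using params c0_pos by (simp add: m_def)
  then show "0 < \<Delta>min"
    using params by (simp add: \<Delta>min_eq)
  have "\<Delta>min \<le> m"
    unfolding \<Delta>min_eq using \<open>0 < m\<close> params by (intro mult_left_le_one_le) auto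
  then show "\<Delta>min \<le> \<Delta>0" "\<Delta>min \<le> c0 * \<epsilon> / (keg + 1)" "\<Delta>min \<le> \<gamma>dec * \<epsilon> / (keg + 1)"
    by (simp_all add: m_def)
  show "\<Delta>min \<le> \<gamma>dec * (c0 * \<epsilon> / (keg + 1))"
    unfolding \<Delta>min_eq using params by (intro mult_left_mono) (auto simp: m_def)
qed

lemma Delta_ge_Delta_min_of_init:
  assumes "\<Delta>min \<le> \<Delta>init k" "\<epsilon> \<le> norm (grad (fobj r) (\<theta> k))"
  shows "\<Delta>min \<le> \<Delta> k"
  using Delta_ge_after_criticality[OF assms(2)] assms(1) Delta_min_bounds(5) by linarith

lemma Delta_init_ge_Delta_min:
  assumes "\<And>j. j < k \<Longrightarrow> \<epsilon> \<le> norm (grad (fobj r) (\<theta> j))"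
  shows "\<Delta>min \<le> \<Delta>init k"
  using assms
proof (induction k)
  case 0
  show ?case
    using Delta_min_bounds(2) init_radius by simp
next
  case (Suc k)
  have grad_k: "\<epsilon> \<le> norm (grad (fobj r) (\<theta> k))"
    using Suc.prems by simp
  then have "\<Delta>min \<le> \<Delta> k"
    using Suc Delta_ge_Delta_min_of_init by simp
  consider (very) "\<eta>2 \<le> \<rho> k"
    | (not_fl) "\<rho> k < \<eta>2" "\<not> fully_linear r kef keg (rt k) (J k) (\<theta> k) (\<Delta> k)"
    | (unsucc) "\<rho> k < \<eta>2" "fully_linear r kef keg (rt k) (J k) (\<theta> k) (\<Delta> k)"
    by linarith
  then show ?case
  proof cases
    case very
    have "\<Delta> k \<le> \<gamma>inc * \<Delta> k"
      using params Delta_pos[of k] by simp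
    moreover have "\<Delta>min \<le> \<Delta>max"
      using Delta_min_bounds(2) params by simp
    ultimately show ?thesis
      using very radius_update[of k] \<open>\<Delta>min \<le> \<Delta> k\<close> by simp
  next
    case not_fl
    then show ?thesis
      using radius_update[of k] \<open>\<Delta>min \<le> \<Delta> k\<close> by simp
  next
    case unsucc
    then have "c0 * norm_g k < \<Delta> k"
      using very_successful_if_small_radius[of k] by force
    moreover have "c0 * \<epsilon> / (keg + 1) \<le> c0 * norm_g k"
      using mult_left_mono[OF norm_g_lower_bound[OF grad_k], of c0] c0_pos by simp
    ultimately have "c0 * \<epsilon> / (keg + 1) \<le> \<Delta> k"
      by linarith
    then have "\<gamma>dec * (c0 * \<epsilon> / (keg + 1)) \<le> \<gamma>dec * \<Delta> k"
      using params by (intro mult_left_mono) auto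
    then show ?thesis
      using unsucc radius_update[of k] Delta_min_bounds(3) by simp
  qed
qed

lemma Delta_ge_Delta_min:
  assumes "\<And>j. j \<le> k \<Longrightarrow> \<epsilon> \<le> norm (grad (fobj r) (\<theta> j))"
  shows "\<Delta>min \<le> \<Delta> k"
  using Delta_ge_Delta_min_of_init Delta_init_ge_Delta_min assms by simp

lemma pred_decrease_ge_Delta_min:
  assumes "\<And>j. j \<le> k \<Longrightarrow> \<epsilon> \<le> norm (grad (fobj r) (\<theta> j))"
  shows "\<epsilon> / (keg + 1) * \<Delta>min / 2 \<le> pred_decrease k"
proof -
  have g_bound: "\<epsilon> / (keg + 1) \<le> norm_g k"
    using norm_g_lower_bound assms by simp
  have "\<Delta>min \<le> c0 * \<epsilon> / (keg + 1)"
    by (rule Delta_min_bounds(4))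
  also have "\<dots> \<le> c0 * norm_g k"
    using mult_left_mono[OF g_bound, of c0] c0_pos by simp
  finally have "\<Delta>min \<le> c0 * norm_g k" .
  have "\<epsilon> / (keg + 1) * \<Delta>min / 2 \<le> norm_g k * \<Delta>min / 2"
    using g_bound Delta_min_bounds(1) by (intro divide_right_mono mult_right_mono) auto
  also have "\<dots> \<le> pred_decrease k"
    using pred_decrease_ge Delta_min_bounds(1) Delta_ge_Delta_min[OF assms] \<open>\<Delta>min \<le> c0 * norm_g k\<close>
    by simp
  finally show ?thesis .
qed

lemma successful_decrease:
  assumes "successful k"
  shows "(\<eta>1 - 2 * \<eta>1') * pred_decrease k \<le> fobj r (\<theta> k) - fobj r (\<theta> (Suc k))"
proof -
  let ?D = "pred_decrease k"
  have "\<eta>1 \<le> \<rho> k"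
    using assms params unfolding successful_def by auto
  have "0 < ?D"
  proof (rule ccontr)
    assume "\<not> 0 < ?D"
    then have "\<rho> k = 0"
      using pred_decrease_nonneg[of k] rho_def[of k] unfolding pred_decrease_def by simp
    then show False
      using \<open>\<eta>1 \<le> \<rho> k\<close> params by simp
  qed
  let ?m0 = "mval (rt k) (J k) 0" and ?fp = "(1 / real CARD('n)) * (norm (rp k))\<^sup>2"
  have "\<eta>1 * ?D \<le> ?m0 - ?fp"
    using rho_def[of k] \<open>\<eta>1 \<le> \<rho> k\<close> \<open>0 < ?D\<close> by (simp add: pred_decrease_def pos_le_divide_eq)
  moreover have "\<bar>?m0 - fobj r (\<theta> k)\<bar> \<le> \<eta>1' * ?D"
    using accuracy[of k] unfolding pred_decrease_def .
  moreover have "\<bar>?fp - fobj r (\<theta> (Suc k))\<bar> \<le> \<eta>1' * ?D"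
    using trial_accuracy[of k] assms iterate_update[of k] unfolding pred_decrease_def successful_def by simp
  ultimately show ?thesis
    by (simp add: algebra_simps abs_le_iff)
qed

lemma objective_nonincreasing: "fobj r (\<theta> (Suc k)) \<le> fobj r (\<theta> k)"
proof (cases "successful k")
  case True
  have "0 \<le> (\<eta>1 - 2 * \<eta>1') * pred_decrease k"
    using params pred_decrease_nonneg[of k] by simp
  then show ?thesis
    using successful_decrease[OF True] by linarith
next
  case False
  then show ?thesis
    using iterate_update[of k] unfolding successful_def by auto
qed

theorem card_successful_le:
  assumes "\<And>k. k \<le> K \<Longrightarrow> \<epsilon> \<le> norm (grad (fobj r) (\<theta> k))"
  shows "real (card {k. k \<le> K \<and> successful k})
    \<le> 2 * (keg + 1) * fobj r (\<theta> 0) / ((\<eta>1 - 2 * \<eta>1') * \<epsilon> * \<Delta>min)"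
proof -
  define c where "c = (\<eta>1 - 2 * \<eta>1') * (\<epsilon> / (keg + 1) * \<Delta>min / 2)"
  have "0 < c"
    using params Delta_min_bounds(1) unfolding c_def by simp
  have "c \<le> fobj r (\<theta> k) - fobj r (\<theta> (Suc k))" if "k \<le> K" "successful k" for k
  proof -
    have "c \<le> (\<eta>1 - 2 * \<eta>1') * pred_decrease k"
      unfolding c_def using pred_decrease_ge_Delta_min[of k] assms that(1) params
      by (intro mult_left_mono) auto
    then show ?thesis
      using successful_decrease[OF that(2)] by linarith
  qed
  then have "real (card {k. k \<le> K \<and> successful k}) * c \<le> fobj r (\<theta> 0)"
    using objective_nonincreasing
    by (intro card_mult_le_of_telescoping[where F = "\<lambda>k. fobj r (\<theta> k)" and K = K])
      (auto simp: fobj_def)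
  then show ?thesis
    using \<open>0 < c\<close> params unfolding c_def by (simp add: pos_le_divide_eq field_simps)
qed

end

theorem proposition1:
  fixes r :: "real^'d \<Rightarrow> real^'n"
    and \<theta>0 :: "real^'d"
    and \<Delta>0 \<Delta>max \<gamma>dec \<gamma>inc \<eta>1 \<eta>2 \<eta>1' \<epsilon> kef keg kH :: real
    and \<theta> :: "nat \<Rightarrow> real^'d"
    and \<Delta>init \<Delta> :: "nat \<Rightarrow> real"
    and icrit :: "nat \<Rightarrow> nat"
    and rt :: "nat \<Rightarrow> real^'n"
    and J :: "nat \<Rightarrow> real^'d^'n"
    and s :: "nat \<Rightarrow> real^'d"
    and rp :: "nat \<Rightarrow> real^'n"
    and \<rho> :: "nat \<Rightarrow> real"
    and k\<epsilon> :: nat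
  assumes params: "\<Delta>max > 0" "0 < \<gamma>dec" "\<gamma>dec < 1" "1 < \<gamma>inc"
      "0 < \<eta>1" "\<eta>1 \<le> \<eta>2" "\<eta>2 < 1" "0 < \<eta>1'" "\<eta>1' < min \<eta>1 (1 - \<eta>2) / 2"
      "\<epsilon> > 0" "kef > 0" "keg > 0" "0 < \<Delta>0" "\<Delta>0 \<le> \<Delta>max"
    and assmA: "assumption_A r \<theta>0 \<Delta>max"
    and init: "\<theta> 0 = \<theta>0" "\<Delta>init 0 = \<Delta>0"
    \<comment> \<open>criticality phase: the radius is shrunk icrit k times from its initial value;
        each shrink happens from a radius at which the model had been made fully linear
        but its model gradient was smaller than the radius\<close>
    and crit_shrink: "\<And>k. \<Delta> k = \<gamma>dec ^ icrit k * \<Delta>init k"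
    and crit_fail: "\<And>k j. j < icrit k \<Longrightarrow>
        \<exists>r0 J'. fully_linear r kef keg r0 J' (\<theta> k) (\<gamma>dec ^ j * \<Delta>init k)
               \<and> norm (mg r0 J') < \<gamma>dec ^ j * \<Delta>init k"
    and crit_post: "\<And>k. norm (mg (rt k) (J k)) \<le> \<epsilon> \<Longrightarrow>
        fully_linear r kef keg (rt k) (J k) (\<theta> k) (\<Delta> k) \<and> \<Delta> k \<le> norm (mg (rt k) (J k))"
    and step_bound: "\<And>k. norm (s k) \<le> \<Delta> k"
    \<comment> \<open>accuracy of tilde f(theta^k) = m^k(0) and of tilde f(theta^k + s^k)\<close>
    and acc: "\<And>k. \<bar>mval (rt k) (J k) 0 - fobj r (\<theta> k)\<bar>
                 \<le> \<eta>1' * (mval (rt k) (J k) 0 - mval (rt k) (J k) (s k))"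
    and acc_plus: "\<And>k. \<bar>(1 / real CARD('n)) * (norm (rp k))\<^sup>2 - fobj r (\<theta> k + s k)\<bar>
                 \<le> \<eta>1' * (mval (rt k) (J k) 0 - mval (rt k) (J k) (s k))"
    and rho_def: "\<And>k. \<rho> k = (mval (rt k) (J k) 0 - (1 / real CARD('n)) * (norm (rp k))\<^sup>2)
                          / (mval (rt k) (J k) 0 - mval (rt k) (J k) (s k))"
    \<comment> \<open>Assumption B\<close>
    and assmB1: "\<And>k. mval (rt k) (J k) 0 - mval (rt k) (J k) (s k)
        \<ge> 1/2 * norm (mg (rt k) (J k))
             * min (\<Delta> k) (norm (mg (rt k) (J k)) / (opnorm (mH (J k)) + 1))"
    and assmB2: "kH \<ge> 1" "\<And>k. opnorm (mH (J k)) + 1 \<le> kH"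
    \<comment> \<open>step 3: iterate and radius updates\<close>
    and theta_upd: "\<And>k. \<theta> (Suc k) =
        (if \<rho> k \<ge> \<eta>2 \<or> (\<rho> k \<ge> \<eta>1 \<and> fully_linear r kef keg (rt k) (J k) (\<theta> k) (\<Delta> k))
         then \<theta> k + s k else \<theta> k)"
    and Delta_upd: "\<And>k. \<Delta>init (Suc k) =
        (if \<rho> k \<ge> \<eta>2 then min (\<gamma>inc * \<Delta> k) \<Delta>max
         else if \<not> fully_linear r kef keg (rt k) (J k) (\<theta> k) (\<Delta> k) then \<Delta> k
         else \<gamma>dec * \<Delta> k)"
    and keps: "\<And>k. k \<le> k\<epsilon> \<Longrightarrow> norm (grad (fobj r) (\<theta> k)) \<ge> \<epsilon>"
              "norm (grad (fobj r) (\<theta> (Suc k\<epsilon>))) < \<epsilon>"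
  shows "real (card {k. k \<le> k\<epsilon> \<and>
              (\<rho> k \<ge> \<eta>2 \<or> (\<rho> k \<ge> \<eta>1 \<and> fully_linear r kef keg (rt k) (J k) (\<theta> k) (\<Delta> k)))})
         \<le> 2 * (keg + 1) * fobj r \<theta>0
            / ((\<eta>1 - 2 * \<eta>1') * \<epsilon> * Delta_min \<gamma>dec \<Delta>0 \<eta>2 \<eta>1' kef keg kH \<epsilon>)"
proof -
  interpret dfo_run r \<Delta>0 \<Delta>max \<gamma>dec \<gamma>inc \<eta>1 \<eta>2 \<eta>1' \<epsilon> kef keg kH \<theta> \<Delta>init \<Delta> icrit rt J s rp \<rho>
    using params init(2) crit_shrink crit_fail crit_post step_bound acc acc_plus rho_def assmB1
      assmB2 theta_upd Delta_upd
    by unfold_locales auto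
  \<comment> \<open>Assumption A only serves to make fully linear models available, and only the first
    half of the characterisation of \<open>k\<epsilon>\<close> is needed.\<close>
  have "real (card {k. k \<le> k\<epsilon> \<and> successful k})
    \<le> 2 * (keg + 1) * fobj r (\<theta> 0) / ((\<eta>1 - 2 * \<eta>1') * \<epsilon> * \<Delta>min)"
    using keps(1) by (rule card_successful_le)
  then show ?thesis
    by (simp add: successful_def init(1))
qed

end
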